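(* Let $(\mathcal C,\Delta,\delta,\beta,* )$ be a braided $*$-coalgebra and let $M,K:\mathcal C\otimes\mathcal C\to\mathbb C$ be linear (bilinear forms), with $M$ $\beta$-invariant. Then $\widetilde{M\star K}=\widetilde M\circledast\widetilde K$, where $M\star K=(M\otimes K)\circ\Lambda$ and $\circledast$ is the convolution of sesquilinear forms defined below.
   Context: Braided $*$-coalgebra: coassociative counital coalgebra $(\mathcal C,\Delta,\delta)$ with $\beta\in\mathrm{Aut}(\mathcal C\otimes\mathcal C)$ satisfying the braid equation $(\beta\otimes\mathrm{id})(\mathrm{id}\otimes\beta)(\beta\otimes\mathrm{id})=(\mathrm{id}\otimes\beta)(\beta\otimes\mathrm{id})(\mathrm{id}\otimes\beta)$, such that $(\Delta\otimes\mathrm{id})\beta=(\mathrm{id}\otimes\beta)(\beta\otimes\mathrm{id})(\mathrm{id}\otimes\Delta)$, $(\mathrm{id}\otimes\Delta)\beta=(\beta\otimes\mathrm{id})(\mathrm{id}\otimes\beta)(\Delta\otimes\mathrm{id})$, $(\delta\otimes\mathrm{id})\beta=\mathrm{id}\otimes\delta$, $(\mathrm{id}\otimes\delta)\beta=\delta\otimes\mathrm{id}$, together with an antilinear involution $*$ such that $\Delta\circ*=\beta\circ( *\otimes* )\circ\tau\circ\Delta$, $\delta(c^* )=\overline{\delta(c)}$, and $\beta\circ( *\otimes* )\circ\tau=( *\otimes* )\circ\tau\circ\beta^{-1}$, $\tau$ the flip. $\Lambda:=(\mathrm{id}\otimes\beta\otimes\mathrm{id})(\Delta\otimes\Delta)$.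 A functional $M$ on $\mathcal C\otimes\mathcal C$ is $\beta$-invariant if $(M\otimes\mathrm{id})\circ(\mathrm{id}\otimes\beta)\circ(\beta\otimes\mathrm{id})=\mathrm{id}\otimes M$ on $\mathcal C^{\otimes3}$. The conjugate space $\overline{\mathcal C}=\{\bar c:c\in\mathcal C\}$ has operations $\bar v+\lambda\bar w:=\overline{v+\bar\lambda w}$; write $\overline{a\otimes b}:=\bar a\otimes\bar b$ and define $\overline\Delta:\overline{\mathcal C}\to\overline{\mathcal C}\otimes\overline{\mathcal C}$ by $\overline\Delta(\bar c)=\overline{\Delta(c)}$. A sesquilinear form is a linear map $\overline{\mathcal C}\otimes\mathcal C\to\mathbb C$; for a bilinear form $K$ put $\widetilde K(\bar a\otimes b):=K(a^*\otimes b)$. For sesquilinear forms $P,Q$: $P\circledast Q:=(P\otimes Q)\circ(\mathrm{id}\otimes\tau\otimes\mathrm{id})\circ(\overline\Delta\otimes\Delta)$. *)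

theory Defs
  imports Complex_Main
begin

text \<open>The complex vector space C is represented by a fixed
Hamel basis indexed by a type 'i (every vector space has one).  Tensor powers of C are
represented by the induced product bases: C\<otimes>C by 'i \<times> 'i, C\<otimes>C\<otimes>C by 'i \<times> ('i \<times> 'i), etc.,
with the complex numbers represented by the one-element basis of type unit.
A vector of the space with basis 'k is a finitely supported coefficient function
'k \<Rightarrow> complex.  A linear (resp. antilinear) map is given by its matrix F :: 'k \<Rightarrow> 'l \<Rightarrow> complex,
F k being the image of the basis vector e_k; a linear functional is given by its values on
the basis, 'k \<Rightarrow> complex.  The conjugate space of C is represented with respect to the basis
of conjugates of basis vectors, again indexed by 'i.\<close>

definition fsupp :: "('k \<Rightarrow> complex) \<Rightarrow> bool" where
  "fsupp v \<longleftrightarrow> finite {k. v k \<noteq> 0}"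

definition lmap :: "('k \<Rightarrow> 'l \<Rightarrow> complex) \<Rightarrow> bool" where
  "lmap F \<longleftrightarrow> (\<forall>k. fsupp (F k))"

definition lapp :: "('k \<Rightarrow> 'l \<Rightarrow> complex) \<Rightarrow> ('k \<Rightarrow> complex) \<Rightarrow> ('l \<Rightarrow> complex)" where
  "lapp F v = (\<lambda>l. \<Sum>k\<in>{k. v k \<noteq> 0}. v k * F k l)"

definition aapp :: "('k \<Rightarrow> 'l \<Rightarrow> complex) \<Rightarrow> ('k \<Rightarrow> complex) \<Rightarrow> ('l \<Rightarrow> complex)" where
  "aapp A v = (\<lambda>l. \<Sum>k\<in>{k. v k \<noteq> 0}. cnj (v k) * A k l)"

definition fval :: "('k \<Rightarrow> complex) \<Rightarrow> ('k \<Rightarrow> complex) \<Rightarrow> complex" where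
  "fval M v = (\<Sum>k\<in>{k. v k \<noteq> 0}. v k * M k)"

definition bvec :: "'k \<Rightarrow> 'k \<Rightarrow> complex" where
  "bvec k = (\<lambda>l. if l = k then 1 else 0)"

definition lbasis :: "('k \<Rightarrow> 'l) \<Rightarrow> 'k \<Rightarrow> 'l \<Rightarrow> complex" where
  "lbasis f = (\<lambda>k. bvec (f k))"

definition lid :: "'k \<Rightarrow> 'k \<Rightarrow> complex" where
  "lid = lbasis id"

definition ltens :: "('a \<Rightarrow> 'b \<Rightarrow> complex) \<Rightarrow> ('c \<Rightarrow> 'd \<Rightarrow> complex)
    \<Rightarrow> ('a \<times> 'c) \<Rightarrow> ('b \<times> 'd) \<Rightarrow> complex" where
  "ltens F G = (\<lambda>ac bd. F (fst ac) (fst bd) * G (snd ac) (snd bd))"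

definition vtens :: "('a \<Rightarrow> complex) \<Rightarrow> ('b \<Rightarrow> complex) \<Rightarrow> ('a \<times> 'b) \<Rightarrow> complex" where
  "vtens u w = (\<lambda>pq. u (fst pq) * w (snd pq))"

definition ftens :: "('a \<Rightarrow> complex) \<Rightarrow> ('b \<Rightarrow> complex) \<Rightarrow> ('a \<times> 'b) \<Rightarrow> complex" where
  "ftens M K = (\<lambda>pq. M (fst pq) * K (snd pq))"

definition lfun :: "('k \<Rightarrow> complex) \<Rightarrow> 'k \<Rightarrow> unit \<Rightarrow> complex" where
  "lfun M = (\<lambda>k _. M k)"

definition tau :: "('a \<times> 'b) \<Rightarrow> ('b \<times> 'a) \<Rightarrow> complex" where
  "tau = lbasis (\<lambda>(a, b). (b, a))"

definition asc :: "(('a \<times> 'b) \<times> 'c) \<Rightarrow> ('a \<times> ('b \<times> 'c)) \<Rightarrow> complex" where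
  "asc = lbasis (\<lambda>((a, b), c). (a, (b, c)))"

definition asc_inv :: "('a \<times> ('b \<times> 'c)) \<Rightarrow> (('a \<times> 'b) \<times> 'c) \<Rightarrow> complex" where
  "asc_inv = lbasis (\<lambda>(a, (b, c)). ((a, b), c))"

definition lunit :: "(unit \<times> 'a) \<Rightarrow> 'a \<Rightarrow> complex" where
  "lunit = lbasis snd"

definition runit :: "('a \<times> unit) \<Rightarrow> 'a \<Rightarrow> complex" where
  "runit = lbasis fst"

definition on12 :: "('i \<times> 'i \<Rightarrow> 'i \<times> 'i \<Rightarrow> complex) \<Rightarrow> ('i \<times> 'i \<times> 'i \<Rightarrow> complex) \<Rightarrow> ('i \<times> 'i \<times> 'i \<Rightarrow> complex)" where
  "on12 F v = lapp asc (lapp (ltens F lid) (lapp asc_inv v))"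

definition on23 :: "('i \<times> 'i \<Rightarrow> 'i \<times> 'i \<Rightarrow> complex) \<Rightarrow> ('i \<times> 'i \<times> 'i \<Rightarrow> complex) \<Rightarrow> ('i \<times> 'i \<times> 'i \<Rightarrow> complex)" where
  "on23 F v = lapp (ltens lid F) v"

definition r4 :: "(('a \<times> 'b) \<times> ('c \<times> 'd)) \<Rightarrow> ('a \<times> (('b \<times> 'c) \<times> 'd)) \<Rightarrow> complex" where
  "r4 = lbasis (\<lambda>((a, b), (c, d)). (a, ((b, c), d)))"

definition r4_inv :: "('a \<times> (('b \<times> 'c) \<times> 'd)) \<Rightarrow> (('a \<times> 'b) \<times> ('c \<times> 'd)) \<Rightarrow> complex" where
  "r4_inv = lbasis (\<lambda>(a, ((b, c), d)). ((a, b), (c, d)))"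

definition mid :: "('b \<times> 'c \<Rightarrow> 'b2 \<times> 'c2 \<Rightarrow> complex)
    \<Rightarrow> (('a \<times> 'b) \<times> ('c \<times> 'd) \<Rightarrow> complex) \<Rightarrow> (('a \<times> 'b2) \<times> ('c2 \<times> 'd) \<Rightarrow> complex)" where
  "mid F v = lapp r4_inv (lapp (ltens lid (ltens F lid)) (lapp r4 v))"

text \<open>Braided *-coalgebra: comultiplication D, counit e, braiding B, antilinear involution S.\<close>
definition braided_star_coalgebra ::
  "('i \<Rightarrow> 'i \<times> 'i \<Rightarrow> complex) \<Rightarrow> ('i \<Rightarrow> complex) \<Rightarrow> ('i \<times> 'i \<Rightarrow> 'i \<times> 'i \<Rightarrow> complex)
     \<Rightarrow> ('i \<Rightarrow> 'i \<Rightarrow> complex) \<Rightarrow> bool" where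
  "braided_star_coalgebra D e B S \<longleftrightarrow>
     lmap D \<and> lmap B \<and> lmap S \<and>
     \<comment> \<open>coassociativity\<close>
     (\<forall>v. fsupp v \<longrightarrow> lapp asc (lapp (ltens D lid) (lapp D v)) = lapp (ltens lid D) (lapp D v)) \<and>
     \<comment> \<open>counitality\<close>
     (\<forall>v. fsupp v \<longrightarrow> lapp lunit (lapp (ltens (lfun e) lid) (lapp D v)) = v) \<and>
     (\<forall>v. fsupp v \<longrightarrow> lapp runit (lapp (ltens lid (lfun e)) (lapp D v)) = v) \<and>
     \<comment> \<open>braid equation\<close>
     (\<forall>v. fsupp v \<longrightarrow> on12 B (on23 B (on12 B v)) = on23 B (on12 B (on23 B v))) \<and>
     \<comment> \<open>compatibility of the braiding with comultiplication and counit\<close>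
     (\<forall>v. fsupp v \<longrightarrow> lapp asc (lapp (ltens D lid) (lapp B v))
                      = on23 B (on12 B (lapp (ltens lid D) v))) \<and>
     (\<forall>v. fsupp v \<longrightarrow> lapp (ltens lid D) (lapp B v)
                      = on12 B (on23 B (lapp asc (lapp (ltens D lid) v)))) \<and>
     (\<forall>v. fsupp v \<longrightarrow> lapp lunit (lapp (ltens (lfun e) lid) (lapp B v))
                      = lapp runit (lapp (ltens lid (lfun e)) v)) \<and>
     (\<forall>v. fsupp v \<longrightarrow> lapp runit (lapp (ltens lid (lfun e)) (lapp B v))
                      = lapp lunit (lapp (ltens (lfun e) lid) v)) \<and>
     \<comment> \<open>S is an antilinear involution\<close>
     (\<forall>v. fsupp v \<longrightarrow> aapp S (aapp S v) = v) \<and>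
     \<comment> \<open>compatibility of * with comultiplication and counit\<close>
     (\<forall>v. fsupp v \<longrightarrow> lapp D (aapp S v) = lapp B (aapp (ltens S S) (lapp tau (lapp D v)))) \<and>
     (\<forall>v. fsupp v \<longrightarrow> fval e (aapp S v) = cnj (fval e v)) \<and>
     \<comment> \<open>B is invertible, and compatibility of * with the braiding\<close>
     (\<exists>Binv. lmap Binv \<and>
        (\<forall>v. fsupp v \<longrightarrow> lapp Binv (lapp B v) = v) \<and>
        (\<forall>v. fsupp v \<longrightarrow> lapp B (lapp Binv v) = v) \<and>
        (\<forall>v. fsupp v \<longrightarrow> lapp B (aapp (ltens S S) (lapp tau v))
                         = aapp (ltens S S) (lapp tau (lapp Binv v))))"

text \<open>beta-invariance of a functional M on C\<otimes>C:
  (M \<otimes> id)(id \<otimes> \<beta>)(\<beta> \<otimes> id) = id \<otimes> M on C\<otimes>C\<otimes>C (both sides valued in C).\<close>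
definition beta_invariant :: "('i \<times> 'i \<Rightarrow> 'i \<times> 'i \<Rightarrow> complex) \<Rightarrow> ('i \<times> 'i \<Rightarrow> complex) \<Rightarrow> bool" where
  "beta_invariant B M \<longleftrightarrow>
     (\<forall>v. fsupp v \<longrightarrow>
        lapp lunit (lapp (ltens (lfun M) lid) (lapp asc_inv (on23 B (on12 B v))))
        = lapp runit (lapp (ltens lid (lfun M)) v))"

text \<open>\<Lambda> = (id \<otimes> \<beta> \<otimes> id)(\<Delta> \<otimes> \<Delta>) and M \<star> K = (M \<otimes> K) \<circ> \<Lambda> (values on basis of C\<otimes>C)\<close>
definition Lam :: "('i \<Rightarrow> 'i \<times> 'i \<Rightarrow> complex) \<Rightarrow> ('i \<times> 'i \<Rightarrow> 'i \<times> 'i \<Rightarrow> complex)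
    \<Rightarrow> ('i \<times> 'i \<Rightarrow> complex) \<Rightarrow> (('i \<times> 'i) \<times> ('i \<times> 'i) \<Rightarrow> complex)" where
  "Lam D B v = mid B (lapp (ltens D D) v)"

definition star_prod :: "('i \<Rightarrow> 'i \<times> 'i \<Rightarrow> complex) \<Rightarrow> ('i \<times> 'i \<Rightarrow> 'i \<times> 'i \<Rightarrow> complex)
    \<Rightarrow> ('i \<times> 'i \<Rightarrow> complex) \<Rightarrow> ('i \<times> 'i \<Rightarrow> complex) \<Rightarrow> ('i \<times> 'i \<Rightarrow> complex)" where
  "star_prod D B M K = (\<lambda>kb. fval (ftens M K) (Lam D B (bvec kb)))"

text \<open>tilde K: the sesquilinear form with \<bar>a \<otimes> b \<mapsto> K(a^* \<otimes> b), given by its values on the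
  basis (conj e_a) \<otimes> e_b of conj(C) \<otimes> C\<close>
definition tilde :: "('i \<Rightarrow> 'i \<Rightarrow> complex) \<Rightarrow> ('i \<times> 'i \<Rightarrow> complex) \<Rightarrow> ('i \<times> 'i \<Rightarrow> complex)" where
  "tilde S K = (\<lambda>ab. fval K (vtens (aapp S (bvec (fst ab))) (bvec (snd ab))))"

text \<open>matrix of conj(\<Delta>) : conj(C) \<rightarrow> conj(C) \<otimes> conj(C) w.r.t. the conjugated bases\<close>
definition cbar :: "('k \<Rightarrow> 'l \<Rightarrow> complex) \<Rightarrow> 'k \<Rightarrow> 'l \<Rightarrow> complex" where
  "cbar F = (\<lambda>k l. cnj (F k l))"

text \<open>P \<circledast> Q = (P \<otimes> Q) \<circ> (id \<otimes> \<tau> \<otimes> id) \<circ> (conj \<Delta> \<otimes> \<Delta>)\<close>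
definition sconv :: "('i \<Rightarrow> 'i \<times> 'i \<Rightarrow> complex) \<Rightarrow> ('i \<times> 'i \<Rightarrow> complex) \<Rightarrow> ('i \<times> 'i \<Rightarrow> complex)
    \<Rightarrow> ('i \<times> 'i \<Rightarrow> complex)" where
  "sconv D P Q = (\<lambda>ab. fval (ftens P Q) (mid tau (lapp (ltens (cbar D) D) (bvec ab))))"

end

theory Submission
  imports Defs
begin

(* Write \<Delta>(c) = c1 \<otimes> c2 and c' for the involution applied to c.  By the
   *-compatibility of \<Delta> we have \<Delta>(a') = \<beta>(a2' \<otimes> a1'), hence
     (M \<star> K)(a' \<otimes> b) = (M \<otimes> K)((id \<otimes> \<beta> \<otimes> id)(\<beta>(a2' \<otimes> a1') \<otimes> b1 \<otimes> b2)).
   The two braidings together with the first slot of M form exactly the left-hand side of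
   the \<beta>-invariance identity (M \<otimes> id)(id \<otimes> \<beta>)(\<beta> \<otimes> id) = id \<otimes> M, so the expression
   collapses to M(a1' \<otimes> b1) K(a2' \<otimes> b2), which is the convolution of the tilde forms
   evaluated at conj(a) \<otimes> b. *)

abbreviation supp :: "('k \<Rightarrow> complex) \<Rightarrow> 'k set" where
  "supp v \<equiv> {k. v k \<noteq> 0}"

lemma supp_bvec [simp]: "supp (bvec k) = {k}" by (auto simp: bvec_def)
lemma fsupp_bvec [simp]: "fsupp (bvec k)" by (simp add: fsupp_def)
lemma fval_bvec [simp]: "fval N (bvec k) = N k" by (simp add: fval_def bvec_def)
lemma lapp_bvec [simp]: "lapp F (bvec k) = F k" by (simp add: lapp_def bvec_def)
lemma aapp_bvec [simp]: "aapp F (bvec k) = F k" by (simp add: aapp_def bvec_def)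
lemma fsupp_unit [simp]: "fsupp (v :: unit \<Rightarrow> complex)" by (simp add: fsupp_def)
lemma fsupp_cnj [simp]: "fsupp (\<lambda>k. cnj (v k)) = fsupp v" by (simp add: fsupp_def)
lemma lmap_fsupp [simp]: "lmap F \<Longrightarrow> fsupp (F k)" by (simp add: lmap_def)
lemma lmap_lbasis [simp]: "lmap (lbasis f)" by (simp add: lmap_def lbasis_def)
lemma lmap_lid [simp]: "lmap lid" by (simp add: lid_def)
lemma lmap_lfun [simp]: "lmap (lfun M)" by (simp add: lmap_def)

lemma aapp_lapp: "aapp A v = lapp A (\<lambda>k. cnj (v k))"
  by (simp add: aapp_def lapp_def)

lemma ltens_apply: "ltens F G k = vtens (F (fst k)) (G (snd k))"
  by (simp add: ltens_def vtens_def)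
lemma lbasis_apply: "lbasis f k = bvec (f k)" by (simp add: lbasis_def)
lemma lid_apply: "lid k = bvec k" by (simp add: lid_def lbasis_def)
lemma lfun_apply: "lfun M k = (\<lambda>_. M k)" by (simp add: lfun_def)

lemma fval_superset:
  assumes "finite A" "supp v \<subseteq> A"
  shows "fval N v = (\<Sum>k\<in>A. v k * N k)"
  unfolding fval_def by (rule sum.mono_neutral_left) (use assms in auto)

lemma fval_unit: "fval N (v :: unit \<Rightarrow> complex) = v () * N ()"
  by (subst fval_superset[of "{()}"]) auto

lemma supp_lapp_subset: "supp (lapp F v) \<subseteq> (\<Union>k\<in>supp v. supp (F k))"
proof
  fix l assume "l \<in> supp (lapp F v)"
  then have "(\<Sum>k\<in>supp v. v k * F k l) \<noteq> 0" by (simp add: lapp_def)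
  then obtain k where "k \<in> supp v" "v k * F k l \<noteq> 0" by (meson sum.neutral)
  then show "l \<in> (\<Union>k\<in>supp v. supp (F k))" by auto
qed

lemma finite_column_union:
  "lmap F \<Longrightarrow> fsupp v \<Longrightarrow> finite (\<Union>k\<in>supp v. supp (F k))"
  by (auto simp: lmap_def fsupp_def)

lemma fsupp_lapp [simp]: "lmap F \<Longrightarrow> fsupp v \<Longrightarrow> fsupp (lapp F v)"
  unfolding fsupp_def by (rule finite_subset[OF supp_lapp_subset finite_column_union])
    (simp_all add: fsupp_def)

lemma fval_lapp:
  assumes F: "lmap F" and v: "fsupp v"
  shows "fval N (lapp F v) = fval (\<lambda>k. fval N (F k)) v"
proof -
  define C where "C = (\<Union>k\<in>supp v. supp (F k))"
  have fC: "finite C" using finite_column_union[OF F v] by (simp add: C_def)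
  have fA: "finite (supp v)" using v by (simp add: fsupp_def)
  have "fval N (lapp F v) = (\<Sum>l\<in>C. (\<Sum>k\<in>supp v. v k * F k l) * N l)"
    using fval_superset[OF fC supp_lapp_subset[of F v, folded C_def]] by (simp add: lapp_def)
  also have "\<dots> = (\<Sum>k\<in>supp v. v k * (\<Sum>l\<in>C. F k l * N l))"
    by (simp add: sum_distrib_left sum_distrib_right mult.assoc sum.swap[of _ C])
  also have "\<dots> = (\<Sum>k\<in>supp v. v k * fval N (F k))"
  proof (rule sum.cong[OF refl])
    fix k assume "k \<in> supp v"
    then have "supp (F k) \<subseteq> C" by (auto simp: C_def)
    then show "v k * (\<Sum>l\<in>C. F k l * N l) = v k * fval N (F k)"
      by (simp add: fval_superset[OF fC])
  qed
  finally show ?thesis by (simp add: fval_def)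
qed

lemma supp_vtens: "supp (vtens u w) = supp u \<times> supp w"
  by (auto simp: vtens_def)

lemma fsupp_vtens [simp]: "fsupp u \<Longrightarrow> fsupp w \<Longrightarrow> fsupp (vtens u w)"
  by (simp add: fsupp_def supp_vtens)

lemma fval_vtens:
  "fval N (vtens u w) = fval (\<lambda>x. fval (\<lambda>y. N (x, y)) w) u"
proof -
  have "fval N (vtens u w) = (\<Sum>x\<in>supp u. \<Sum>y\<in>supp w. u x * (w y * N (x, y)))"
    unfolding fval_def supp_vtens
    by (simp add: sum.cartesian_product vtens_def mult.assoc split_beta)
  then show ?thesis by (simp add: fval_def sum_distrib_left)
qed

lemma lmap_ltens [simp]: "lmap F \<Longrightarrow> lmap G \<Longrightarrow> lmap (ltens F G)"
  by (simp add: lmap_def ltens_apply)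

lemma lapp_ltens_vtens:
  "lapp (ltens F G) (vtens u w) = vtens (lapp F u) (lapp G w)"
proof
  fix l
  have "lapp (ltens F G) (vtens u w) l
      = (\<Sum>x\<in>supp u. \<Sum>y\<in>supp w. (u x * F x (fst l)) * (w y * G y (snd l)))"
    unfolding lapp_def supp_vtens
    by (simp add: sum.cartesian_product vtens_def ltens_def mult_ac split_beta)
  then show "lapp (ltens F G) (vtens u w) l = vtens (lapp F u) (lapp G w) l"
    by (simp add: vtens_def lapp_def sum_product)
qed

lemma fval_swap:
  "fval (\<lambda>x. fval (\<lambda>y. X x y) w) v = fval (\<lambda>y. fval (\<lambda>x. X x y) v) w"
  unfolding fval_def by (simp add: sum_distrib_left mult.left_commute sum.swap[of _ "supp w"])

lemma fval_mult: "fval f u * fval g w = fval (\<lambda>q. fval (\<lambda>p. f q * g p) w) u"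
  unfolding fval_def by (simp add: sum_product mult_ac sum_distrib_left) (rule sum.swap)

lemma lapp_lbasis_bij:
  assumes "fsupp v" "\<And>x. g (f x) = x" "\<And>y. f (g y) = y"
  shows "lapp (lbasis f) v = (\<lambda>l. v (g l))"
proof
  fix l
  have "lapp (lbasis f) v l = (\<Sum>k\<in>supp v. if k = g l then v k else 0)"
    unfolding lapp_def lbasis_def bvec_def by (rule sum.cong) (use assms in auto)
  then show "lapp (lbasis f) v l = v (g l)"
    using assms(1) by (simp add: fsupp_def)
qed

lemma lapp_lid: "fsupp v \<Longrightarrow> lapp lid v = v"
  unfolding lid_def by (subst lapp_lbasis_bij[of _ id id]) auto

lemma lapp_tau: "fsupp v \<Longrightarrow> lapp tau v = (\<lambda>l. v (snd l, fst l))"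
  unfolding tau_def by (rule lapp_lbasis_bij) auto

lemmas basis_simps = lbasis_apply lid_apply ltens_apply lfun_apply fval_unit

lemma fval_ftens_mid:
  assumes "lmap F" "fsupp v"
  shows "fval (ftens M K) (mid F v) =
    fval (\<lambda>x. fval (\<lambda>y. M (fst (fst x), fst y) * K (snd y, snd (snd x)))
                    (F (snd (fst x), fst (snd x)))) v"
  unfolding mid_def r4_def r4_inv_def
  using assms by (simp add: fval_lapp fval_vtens basis_simps split_beta ftens_def)

(* The functional contracting (M \<star> K) after \<Delta> \<otimes> \<Delta>: first slot of M and last slot of K see
   the outer legs, the braiding mixes the inner legs. *)
definition star_integrand ::
  "('i \<times> 'i \<Rightarrow> 'i \<times> 'i \<Rightarrow> complex) \<Rightarrow> ('i \<times> 'i \<Rightarrow> complex) \<Rightarrow> ('i \<times> 'i \<Rightarrow> complex)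
     \<Rightarrow> ('i \<times> 'i) \<times> ('i \<times> 'i) \<Rightarrow> complex" where
  "star_integrand B M K = (\<lambda>x. fval (\<lambda>y. M (fst (fst x), fst y) * K (snd y, snd (snd x)))
                                       (B (snd (fst x), fst (snd x))))"

lemma star_prod_expand:
  assumes "lmap D" "lmap B"
  shows "star_prod D B M K = (\<lambda>kb. fval (star_integrand B M K) (ltens D D kb))"
  using assms by (simp add: star_prod_def Lam_def fval_ftens_mid star_integrand_def)

(* \<beta>-invariance evaluated on e_p \<otimes> e_q \<otimes> e_k and paired with K(-, e_l): two successive braidings
   in front of M collapse to M(e_q \<otimes> e_k) K(e_p \<otimes> e_l), where (p, q) = pq. *)
lemma beta_invariant_contract:
  assumes B: "lmap B" and inv: "beta_invariant B M"
  shows "fval (\<lambda>x. fval (\<lambda>y. M (fst x, fst y) * K (snd y, l)) (B (snd x, k))) (B pq)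
         = M (snd pq, k) * K (fst pq, l)"
proof -
  let ?v = "bvec (fst pq, (snd pq, k))"
  have "lapp lunit (lapp (ltens (lfun M) lid) (lapp asc_inv (on23 B (on12 B ?v))))
        = lapp runit (lapp (ltens lid (lfun M)) ?v)"
    using inv unfolding beta_invariant_def by auto
  then have "fval (\<lambda>u. K (u, l))
               (lapp lunit (lapp (ltens (lfun M) lid) (lapp asc_inv (on23 B (on12 B ?v)))))
           = fval (\<lambda>u. K (u, l)) (lapp runit (lapp (ltens lid (lfun M)) ?v))"
    by simp
  then show ?thesis
    unfolding on12_def on23_def asc_def asc_inv_def lunit_def runit_def
    using B by (simp add: fval_lapp fval_vtens basis_simps split_beta)
qed

lemma star_integrand_braided:
  assumes B: "lmap B" and inv: "beta_invariant B M" and z: "fsupp z" and w: "fsupp w"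
  shows "fval (star_integrand B M K) (vtens (lapp B z) w)
         = fval (\<lambda>x. fval (\<lambda>y. M (snd x, fst y) * K (fst x, snd y)) w) z"
proof -
  have "vtens (lapp B z) w = lapp (ltens B lid) (vtens z w)"
    using w by (simp add: lapp_ltens_vtens lapp_lid)
  then have "fval (star_integrand B M K) (vtens (lapp B z) w)
      = fval (\<lambda>x. fval (\<lambda>y. fval (\<lambda>u. fval (\<lambda>t. M (fst u, fst t) * K (snd t, snd y))
                                               (B (snd u, fst y))) (B x)) w) z"
    using B z w by (simp add: fval_lapp fval_vtens basis_simps star_integrand_def split_beta)
  also have "\<dots> = fval (\<lambda>x. fval (\<lambda>y. M (snd x, fst y) * K (fst x, snd y)) w) z"
    by (simp add: beta_invariant_contract[OF B inv, where K = K])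
  finally show ?thesis .
qed

lemma pairing_star_flip:
  assumes S: "lmap S" and u: "fsupp u" and w: "fsupp w"
  shows "fval (\<lambda>x. fval (\<lambda>y. M (snd x, fst y) * K (fst x, snd y)) w)
              (aapp (ltens S S) (lapp tau u))
         = fval (\<lambda>x. fval (\<lambda>y. tilde S M (fst x, fst y) * tilde S K (snd x, snd y)) w)
                (\<lambda>k. cnj (u k))"
proof -
  have "aapp (ltens S S) (lapp tau u) = lapp (ltens S S) (lapp tau (\<lambda>k. cnj (u k)))"
    using u by (simp add: aapp_lapp lapp_tau)
  moreover have "fval (\<lambda>p. fval (\<lambda>q. fval (\<lambda>y. M (q, fst y) * K (p, snd y)) w) Si) Sj
      = fval (\<lambda>y. fval (\<lambda>q. M (q, fst y)) Si * fval (\<lambda>p. K (p, snd y)) Sj) w" for Si Sj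
    by (simp add: fval_mult fval_swap[of _ w] fval_swap[of _ _ Sj])
  ultimately show ?thesis
    using S u w
    by (simp add: fval_lapp ltens_apply fval_vtens tilde_def tau_def lbasis_apply split_beta)
qed

lemma sconv_expand:
  assumes "lmap D"
  shows "sconv D P Q (a, b)
         = fval (\<lambda>x. fval (\<lambda>y. P (fst x, fst y) * Q (snd x, snd y)) (D b)) (\<lambda>k. cnj (D a k))"
  unfolding sconv_def mid_def r4_def r4_inv_def tau_def cbar_def
  using assms by (simp add: fval_lapp fval_vtens basis_simps split_beta ftens_def)

theorem mainTheorem9:
  fixes D :: "'i \<Rightarrow> 'i \<times> 'i \<Rightarrow> complex"
    and e :: "'i \<Rightarrow> complex"
    and B :: "'i \<times> 'i \<Rightarrow> 'i \<times> 'i \<Rightarrow> complex"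
    and S :: "'i \<Rightarrow> 'i \<Rightarrow> complex"
    and M K :: "'i \<times> 'i \<Rightarrow> complex"
  assumes "braided_star_coalgebra D e B S"
    and "beta_invariant B M"
  shows "tilde S (star_prod D B M K) = sconv D (tilde S M) (tilde S K)"
proof (rule ext, clarify)
  fix a b :: 'i
  from assms(1) have D: "lmap D" and B: "lmap B" and S: "lmap S"
    and D_star: "lapp D (S a) = lapp B (aapp (ltens S S) (lapp tau (D a)))"
    unfolding braided_star_coalgebra_def by (auto dest!: spec[of _ "bvec a"])
  define z where "z = aapp (ltens S S) (lapp tau (D a))"
  have z: "fsupp z" unfolding z_def aapp_lapp tau_def using D S by simp
  have "tilde S (star_prod D B M K) (a, b)
      = fval (star_integrand B M K) (lapp (ltens D D) (vtens (S a) (bvec b)))"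
    using D B S by (simp add: tilde_def star_prod_expand fval_lapp)
  also have "\<dots> = fval (star_integrand B M K) (vtens (lapp B z) (D b))"
    by (simp add: lapp_ltens_vtens D_star z_def)
  also have "\<dots> = fval (\<lambda>x. fval (\<lambda>y. M (snd x, fst y) * K (fst x, snd y)) (D b)) z"
    using star_integrand_braided[OF B assms(2) z] D by simp
  also have "\<dots> = sconv D (tilde S M) (tilde S K) (a, b)"
    using pairing_star_flip[OF S] D by (simp add: z_def sconv_expand)
  finally show "tilde S (star_prod D B M K) (a, b) = sconv D (tilde S M) (tilde S K) (a, b)" .
qed

end
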